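(* Let $(u_k)_{k\in\mathbb N}$ be a sequence generated by the proximal-gradient algorithm (with parameter $\eta>0$ and starting point $u_0\in U_{ad}\cap\mathrm{BV}(0,T)$), and assume that $\nabla F$ is Lipschitz continuous from $L^2(0,T)$ to $L^2(0,T)$ with modulus $L$. Then: (1) $(u_k)$ and $(\nabla F(u_k))$ are bounded in $L^2(0,T)$; (2) the sequence $(F(u_k)+G(u_k))_k$ is nonincreasing and convergent; (3) $\|u_{k+1}-u_k\|_{L^2(0,T)}\to0$; (4) $(u_k)$ converges weakly-$\star$ in $\mathrm{BV}(0,T)$ (in particular strongly in $L^1(0,T)$) to some $\bar u\in U_{ad}$.
   Context: $T>0$, $\beta>0$; $\nu_1<\dots<\nu_d$ are integers. $\mathrm{TV}(u):=\sup\{\int_0^T u\varphi'\,dt : \varphi\in C_c^1(0,T),\ \|\varphi\|_\infty\le 1\}$, $\mathrm{BV}(0,T)=\{u\in L^1(0,T):\mathrm{TV}(u)<\infty\}$ with norm $\|u\|_{L^1}+\mathrm{TV}(u)$; weak-$\star$ convergence in $\mathrm{BV}(0,T)$ refers to $\mathrm{BV}(0,T)$ as a dual of a separable Banach space (equivalently: $L^1$-convergence plus boundedness in $\mathrm{BV}$). $U_{ad}:=\{u\in L^1(0,T): u(t)\in\{\nu_1,\dots,\nu_d\}\text{ a.e.}\}$. $F:L^1(0,T)\to\mathbb R$ is bounded from below and Gâteaux differentiable on $L^2(0,T)$ with gradient $\nabla F(u)\in L^2(0,T)$. $G:L^2(0,T)\to\mathbb R\cup\{\infty\}$, $G(u):=\beta\mathrm{TV}(u)+\delta_{U_{ad}}(u)$,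 where $\delta_{U_{ad}}(u)=0$ if $u\in U_{ad}$ and $\infty$ otherwise. Proximal-gradient algorithm: given $u_0$ and $\eta>0$, for $k=0,1,2,\dots$ choose $\tau_k>0$ and a solution $u_{k+1}$ of $\min_{u\in L^2(0,T)} F(u_k)+(\nabla F(u_k),u-u_k)_{L^2}+\frac{\tau_k}2\|u-u_k\|_{L^2}^2+G(u)$ such that $\eta\|u_{k+1}-u_k\|_{L^2}^2\le F(u_k)+\beta\mathrm{TV}(u_k)-(F(u_{k+1})+\beta\mathrm{TV}(u_{k+1}))$; a sequence is generated by the algorithm if such choices are made at every step. *)

theory Defs
  imports "HOL-Analysis.Analysis"
begin

text \<open>Functions on (0,T) are represented by functions real => real; the measure
  space is Lebesgue measure restricted to the open interval (0,T).\<close>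

abbreviation MT :: "real \<Rightarrow> real measure" where
  "MT T \<equiv> lebesgue_on {0<..<T}"

definition inL1 :: "real \<Rightarrow> (real \<Rightarrow> real) \<Rightarrow> bool" where
  "inL1 T u \<longleftrightarrow> u \<in> borel_measurable (MT T) \<and> integrable (MT T) u"

definition inL2 :: "real \<Rightarrow> (real \<Rightarrow> real) \<Rightarrow> bool" where
  "inL2 T u \<longleftrightarrow> u \<in> borel_measurable (MT T) \<and> integrable (MT T) (\<lambda>t. (u t)\<^sup>2)"

definition L2_inner :: "real \<Rightarrow> (real \<Rightarrow> real) \<Rightarrow> (real \<Rightarrow> real) \<Rightarrow> real" where
  "L2_inner T u v = (\<integral>t. u t * v t \<partial>MT T)"

definition L2_norm :: "real \<Rightarrow> (real \<Rightarrow> real) \<Rightarrow> real" where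
  "L2_norm T u = sqrt (\<integral>t. (u t)\<^sup>2 \<partial>MT T)"

definition L1_norm :: "real \<Rightarrow> (real \<Rightarrow> real) \<Rightarrow> real" where
  "L1_norm T u = (\<integral>t. \<bar>u t\<bar> \<partial>MT T)"

definition test_fun :: "real \<Rightarrow> (real \<Rightarrow> real) \<Rightarrow> bool" where
  "test_fun T \<phi> \<longleftrightarrow> (\<forall>x. \<phi> differentiable at x) \<and> continuous_on UNIV (deriv \<phi>)
     \<and> (\<exists>a b. 0 < a \<and> a \<le> b \<and> b < T \<and> (\<forall>x. x \<notin> {a..b} \<longrightarrow> \<phi> x = 0))
     \<and> (\<forall>x. \<bar>\<phi> x\<bar> \<le> 1)"

definition TV :: "real \<Rightarrow> (real \<Rightarrow> real) \<Rightarrow> ereal" where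
  "TV T u = (SUP \<phi>\<in>{\<phi>. test_fun T \<phi>}. ereal (\<integral>t. u t * deriv \<phi> t \<partial>MT T))"

definition inBV :: "real \<Rightarrow> (real \<Rightarrow> real) \<Rightarrow> bool" where
  "inBV T u \<longleftrightarrow> inL1 T u \<and> TV T u < \<infinity>"

definition Uad :: "real \<Rightarrow> int set \<Rightarrow> (real \<Rightarrow> real) \<Rightarrow> bool" where
  "Uad T V u \<longleftrightarrow> inL1 T u \<and> (AE t in MT T. u t \<in> real_of_int ` V)"

definition Gfun :: "real \<Rightarrow> real \<Rightarrow> int set \<Rightarrow> (real \<Rightarrow> real) \<Rightarrow> ereal" where
  "Gfun T \<beta> V u = ereal \<beta> * TV T u + (if Uad T V u then 0 else \<infinity>)"

definition prox_grad_seq ::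
  "real \<Rightarrow> real \<Rightarrow> int set \<Rightarrow> ((real \<Rightarrow> real) \<Rightarrow> real) \<Rightarrow> ((real \<Rightarrow> real) \<Rightarrow> (real \<Rightarrow> real))
   \<Rightarrow> real \<Rightarrow> (nat \<Rightarrow> real \<Rightarrow> real) \<Rightarrow> bool" where
  "prox_grad_seq T \<beta> V F gradF \<eta> u \<longleftrightarrow>
     (\<forall>k. \<exists>\<tau>>0. inL2 T (u (Suc k)) \<and>
        (\<forall>v. inL2 T v \<longrightarrow>
           ereal (F (u k) + L2_inner T (gradF (u k)) (\<lambda>t. u (Suc k) t - u k t)
                  + \<tau> / 2 * (L2_norm T (\<lambda>t. u (Suc k) t - u k t))\<^sup>2) + Gfun T \<beta> V (u (Suc k))
           \<le> ereal (F (u k) + L2_inner T (gradF (u k)) (\<lambda>t. v t - u k t)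
                  + \<tau> / 2 * (L2_norm T (\<lambda>t. v t - u k t))\<^sup>2) + Gfun T \<beta> V v) \<and>
        ereal (F (u (Suc k))) + ereal \<beta> * TV T (u (Suc k))
          + ereal (\<eta> * (L2_norm T (\<lambda>t. u (Suc k) t - u k t))\<^sup>2)
        \<le> ereal (F (u k)) + ereal \<beta> * TV T (u k))"

end

theory Submission imports Defs begin

text \<open>Comparing the proximal step with the competitor \<open>v = u\<^sub>k\<close> shows that \<open>G(u\<^sub>k+\<^sub>1)\<close> is finite,
  so every iterate is admissible with finite total variation. The sufficient-decrease condition
  makes \<open>E\<^sub>k = F(u\<^sub>k) + \<beta> TV(u\<^sub>k)\<close> nonincreasing; since \<open>F\<close> is bounded below, \<open>E\<^sub>k\<close> converges,
  the steps are square-summable and \<open>TV(u\<^sub>k)\<close> stays bounded. Admissible functions take finitely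
  many integer values: they are uniformly bounded (which gives the \<open>L\<^sup>2\<close> bounds, and those of
  \<open>\<nabla>F\<close> via Lipschitz continuity), and \<open>|u\<^sub>k+\<^sub>1 - u\<^sub>k| \<le> |u\<^sub>k+\<^sub>1 - u\<^sub>k|\<^sup>2\<close>, so the increments are
  summable in \<open>L\<^sup>1\<close>. Hence \<open>u\<^sub>k\<close> converges almost everywhere to an admissible limit, in \<open>L\<^sup>1\<close> by
  dominated convergence, and the total variation bound passes to the limit.\<close>

lemma finite_measure_MT: "finite_measure (MT T)"
  by (rule finite_measure_lebesgue_on[OF lmeasurable_interval(2)])

lemma integrable_MT_AE_bounded:
  fixes f :: "real \<Rightarrow> real"
  assumes "f \<in> borel_measurable (MT T)" "AE t in MT T. \<bar>f t\<bar> \<le> B"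
  shows "integrable (MT T) f"
proof -
  have "AE t in MT T. norm (f t) \<le> B" using assms(2) by eventually_elim simp
  then show ?thesis by (rule finite_measure.integrable_const_bound[OF finite_measure_MT _ assms(1)])
qed

lemma AE_convergent_if_summable_increments:
  fixes u :: "nat \<Rightarrow> 'a \<Rightarrow> real"
  assumes meas: "\<And>k. u k \<in> borel_measurable M"
    and int: "\<And>k. integrable M (\<lambda>t. \<bar>u (Suc k) t - u k t\<bar>)"
    and sum: "summable (\<lambda>k. \<integral>t. \<bar>u (Suc k) t - u k t\<bar> \<partial>M)"
  shows "AE t in M. (\<lambda>k. u k t) \<longlonglongrightarrow> lim (\<lambda>k. u k t)"
proof -
  let ?a = "\<lambda>k. \<integral>t. \<bar>u (Suc k) t - u k t\<bar> \<partial>M"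
  have incr_meas: "(\<lambda>t. ennreal \<bar>u (Suc k) t - u k t\<bar>) \<in> borel_measurable M" for k
    using meas[of k] meas[of "Suc k"] by measurable
  have "(\<integral>\<^sup>+ t. (\<Sum>k. ennreal \<bar>u (Suc k) t - u k t\<bar>) \<partial>M)
        = (\<Sum>k. \<integral>\<^sup>+ t. ennreal \<bar>u (Suc k) t - u k t\<bar> \<partial>M)"
    by (rule nn_integral_suminf[OF incr_meas])
  also have "\<dots> = (\<Sum>k. ennreal (?a k))"
    by (intro suminf_cong nn_integral_eq_integral[OF int]) simp
  also have "\<dots> = ennreal (\<Sum>k. ?a k)"
    by (rule suminf_ennreal2[OF _ sum]) simp
  finally have "(\<integral>\<^sup>+ t. (\<Sum>k. ennreal \<bar>u (Suc k) t - u k t\<bar>) \<partial>M) \<noteq> \<infinity>"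
    by simp
  moreover have "(\<lambda>t. \<Sum>k. ennreal \<bar>u (Suc k) t - u k t\<bar>) \<in> borel_measurable M"
    using incr_meas by measurable
  ultimately have "AE t in M. (\<Sum>k. ennreal \<bar>u (Suc k) t - u k t\<bar>) \<noteq> \<infinity>"
    by (intro nn_integral_PInf_AE)
  then show ?thesis
  proof eventually_elim
    fix t assume "(\<Sum>k. ennreal \<bar>u (Suc k) t - u k t\<bar>) \<noteq> \<infinity>"
    then have "summable (\<lambda>k. \<bar>u (Suc k) t - u k t\<bar>)"
      by (intro summable_suminf_not_top) auto
    then have "(\<lambda>n. \<Sum>k<n. u (Suc k) t - u k t) \<longlonglongrightarrow> (\<Sum>k. u (Suc k) t - u k t)"
      by (rule summable_LIMSEQ[OF summable_rabs_cancel])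
    then have "(\<lambda>n. (u n t - u 0 t) + u 0 t) \<longlonglongrightarrow> (\<Sum>k. u (Suc k) t - u k t) + u 0 t"
      by (intro tendsto_add tendsto_const) (simp add: sum_lessThan_telescope[of "\<lambda>k. u k t"])
    then have "convergent (\<lambda>n. u n t)" by (auto simp: convergent_def)
    then show "(\<lambda>k. u k t) \<longlonglongrightarrow> lim (\<lambda>k. u k t)" by (rule convergent_LIMSEQ_iff[THEN iffD1])
  qed
qed

lemma L1_norm_tendsto_0_if_AE_tendsto:
  assumes meas: "\<And>k. u k \<in> borel_measurable (MT T)" "ub \<in> borel_measurable (MT T)"
    and bounded: "\<And>k. AE t in MT T. \<bar>u k t\<bar> \<le> B" "AE t in MT T. \<bar>ub t\<bar> \<le> B"
    and lim: "AE t in MT T. (\<lambda>k. u k t) \<longlonglongrightarrow> ub t"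
  shows "(\<lambda>k. L1_norm T (\<lambda>t. u k t - ub t)) \<longlonglongrightarrow> 0"
proof -
  have "(\<lambda>k. \<integral>t. \<bar>u k t - ub t\<bar> \<partial>MT T) \<longlonglongrightarrow> (\<integral>t. 0 \<partial>MT T)"
  proof (rule integral_dominated_convergence[where w="\<lambda>t. 2 * B"])
    show "(\<lambda>t. \<bar>u k t - ub t\<bar>) \<in> borel_measurable (MT T)" for k
      using meas by measurable
    show "integrable (MT T) (\<lambda>t. 2 * B)"
      by (rule finite_measure.integrable_const[OF finite_measure_MT])
    show "AE t in MT T. (\<lambda>k. \<bar>u k t - ub t\<bar>) \<longlonglongrightarrow> 0"
      using lim by eventually_elim (simp add: tendsto_rabs_zero LIM_zero)
    show "AE t in MT T. norm \<bar>u k t - ub t\<bar> \<le> 2 * B" for k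
      using bounded(1)[of k] bounded(2) by eventually_elim simp
  qed simp
  then show ?thesis unfolding L1_norm_def by simp
qed

lemma test_fun_zero: "0 < T \<Longrightarrow> test_fun T (\<lambda>_. 0)"
  unfolding test_fun_def by (auto intro!: exI[of _ "T/2"])

lemma TV_nonneg:
  assumes "0 < T" shows "0 \<le> TV T u"
proof -
  have "ereal (\<integral>t. u t * deriv (\<lambda>_. 0) t \<partial>MT T) \<le> TV T u"
    unfolding TV_def by (rule SUP_upper) (simp add: test_fun_zero[OF assms])
  then show ?thesis by (simp add: zero_ereal_def)
qed

lemma ereal_real_of_TV: "0 < T \<Longrightarrow> TV T u < \<infinity> \<Longrightarrow> ereal (real_of_ereal (TV T u)) = TV T u"
  using TV_nonneg[of T u] by (cases "TV T u") auto

lemma real_of_TV_nonneg: "0 < T \<Longrightarrow> 0 \<le> real_of_ereal (TV T u)"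
  using TV_nonneg[of T u] by (simp add: real_of_ereal_pos)

lemma test_fun_deriv_bounded:
  assumes "test_fun T \<phi>"
  obtains D where "\<And>t. t \<in> {0..T} \<Longrightarrow> \<bar>deriv \<phi> t\<bar> \<le> D" "deriv \<phi> \<in> borel_measurable (MT T)"
proof -
  have cont: "continuous_on UNIV (deriv \<phi>)" using assms unfolding test_fun_def by blast
  have "bounded (deriv \<phi> ` {0..T})"
    by (intro compact_imp_bounded compact_continuous_image continuous_on_subset[OF cont]) auto
  then obtain D where "\<forall>y \<in> deriv \<phi> ` {0..T}. norm y \<le> D"
    unfolding bounded_iff by blast
  then have "\<And>t. t \<in> {0..T} \<Longrightarrow> \<bar>deriv \<phi> t\<bar> \<le> D" by force
  moreover have "deriv \<phi> \<in> borel_measurable (MT T)"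
    by (rule continuous_imp_measurable_on_sets_lebesgue[OF continuous_on_subset[OF cont subset_UNIV]])
       (rule fmeasurableD[OF lmeasurable_interval(2)])
  ultimately show ?thesis by (rule that)
qed

lemma TV_le_if_AE_tendsto:
  assumes meas: "\<And>k. u k \<in> borel_measurable (MT T)" "ub \<in> borel_measurable (MT T)"
    and bounded: "\<And>k. AE t in MT T. \<bar>u k t\<bar> \<le> B"
    and lim: "AE t in MT T. (\<lambda>k. u k t) \<longlonglongrightarrow> ub t"
    and TV_bound: "\<And>k. TV T (u k) \<le> ereal C"
  shows "TV T ub \<le> ereal C"
  unfolding TV_def
proof (rule SUP_least)
  fix \<phi> assume "\<phi> \<in> {\<phi>. test_fun T \<phi>}"
  then have \<phi>: "test_fun T \<phi>" by simp
  obtain D where D: "\<And>t. t \<in> {0..T} \<Longrightarrow> \<bar>deriv \<phi> t\<bar> \<le> D"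
    and D_meas: "deriv \<phi> \<in> borel_measurable (MT T)"
    using test_fun_deriv_bounded[OF \<phi>] by blast
  have "(\<lambda>k. \<integral>t. u k t * deriv \<phi> t \<partial>MT T) \<longlonglongrightarrow> (\<integral>t. ub t * deriv \<phi> t \<partial>MT T)"
  proof (rule integral_dominated_convergence[where w="\<lambda>t. B * D"])
    show "(\<lambda>t. ub t * deriv \<phi> t) \<in> borel_measurable (MT T)"
      using meas(2) D_meas by measurable
    show "(\<lambda>t. u k t * deriv \<phi> t) \<in> borel_measurable (MT T)" for k
      using meas(1)[of k] D_meas by measurable
    show "integrable (MT T) (\<lambda>t. B * D)"
      by (rule finite_measure.integrable_const[OF finite_measure_MT])
    show "AE t in MT T. (\<lambda>k. u k t * deriv \<phi> t) \<longlonglongrightarrow> ub t * deriv \<phi> t"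
      using lim by eventually_elim (intro tendsto_mult tendsto_const)
    have "AE t in MT T. t \<in> {0..T}" by (rule AE_I2) simp
    then show "AE t in MT T. norm (u k t * deriv \<phi> t) \<le> B * D" for k
      using bounded[of k] by eventually_elim (auto simp: abs_mult intro!: mult_mono' D)
  qed
  moreover have "(\<integral>t. u k t * deriv \<phi> t \<partial>MT T) \<le> C" for k
  proof -
    have "ereal (\<integral>t. u k t * deriv \<phi> t \<partial>MT T) \<le> TV T (u k)"
      unfolding TV_def by (rule SUP_upper) (simp add: \<phi>)
    also have "\<dots> \<le> ereal C" by (rule TV_bound)
    finally show ?thesis by simp
  qed
  ultimately show "ereal (\<integral>t. ub t * deriv \<phi> t \<partial>MT T) \<le> ereal C"
    by (simp add: LIMSEQ_le_const2)
qed

lemma power2_le_if_abs_le: "\<bar>x\<bar> \<le> B \<Longrightarrow> x\<^sup>2 \<le> (B::real)\<^sup>2"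
  by (metis abs_ge_zero order_trans power2_le_iff_abs_le)

lemma L2_norm_nonneg: "0 \<le> L2_norm T f"
  unfolding L2_norm_def by simp

lemma power2_L2_norm: "(L2_norm T f)\<^sup>2 = (\<integral>t. (f t)\<^sup>2 \<partial>MT T)"
  unfolding L2_norm_def by simp

lemma L2_norm_le_if_AE_bounded:
  fixes f :: "real \<Rightarrow> real"
  assumes "AE t in MT T. \<bar>f t\<bar> \<le> B"
  shows "L2_norm T f \<le> sqrt (B\<^sup>2 * measure (MT T) (space (MT T)))"
proof -
  have "(\<integral>t. (f t)\<^sup>2 \<partial>MT T) \<le> (\<integral>t. B\<^sup>2 \<partial>MT T)"
  proof (rule integral_mono_AE')
    show "AE t in MT T. (f t)\<^sup>2 \<le> B\<^sup>2"
      using assms by eventually_elim (rule power2_le_if_abs_le)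
  qed (simp_all add: finite_measure.integrable_const[OF finite_measure_MT])
  then show ?thesis unfolding L2_norm_def by (simp add: mult.commute)
qed

lemma integrable_square_diff:
  assumes f: "inL2 T f" and g: "inL2 T g"
  shows "integrable (MT T) (\<lambda>t. (f t - g t)\<^sup>2)"
proof (rule Bochner_Integration.integrable_bound[where f="\<lambda>t. 2 * (f t)\<^sup>2 + 2 * (g t)\<^sup>2"])
  show "integrable (MT T) (\<lambda>t. 2 * (f t)\<^sup>2 + 2 * (g t)\<^sup>2)"
    using f g unfolding inL2_def by simp
  have "f \<in> borel_measurable (MT T)" "g \<in> borel_measurable (MT T)"
    using f g unfolding inL2_def by auto
  then show "(\<lambda>t. (f t - g t)\<^sup>2) \<in> borel_measurable (MT T)" by measurable
  have "(a - b)\<^sup>2 \<le> 2 * a\<^sup>2 + 2 * b\<^sup>2" for a b :: real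
    using zero_le_power2[of "a + b"] by (simp add: power2_eq_square algebra_simps)
  then show "AE t in MT T. norm ((f t - g t)\<^sup>2) \<le> norm (2 * (f t)\<^sup>2 + 2 * (g t)\<^sup>2)"
    by simp
qed

lemma L2_norm_le_via_diff:
  assumes f: "inL2 T f" and g: "inL2 T g"
  shows "L2_norm T f \<le> sqrt (2 * (L2_norm T (\<lambda>t. f t - g t))\<^sup>2 + 2 * (L2_norm T g)\<^sup>2)"
proof -
  have int: "integrable (MT T) (\<lambda>t. (f t - g t)\<^sup>2)" "integrable (MT T) (\<lambda>t. (g t)\<^sup>2)"
    using integrable_square_diff[OF f g] g unfolding inL2_def by auto
  have "(a::real)\<^sup>2 \<le> 2 * (a - b)\<^sup>2 + 2 * b\<^sup>2" for a b
    using zero_le_power2[of "a - 2 * b"] by (simp add: power2_eq_square algebra_simps)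
  then have "(\<integral>t. (f t)\<^sup>2 \<partial>MT T) \<le> (\<integral>t. 2 * (f t - g t)\<^sup>2 + 2 * (g t)\<^sup>2 \<partial>MT T)"
    using int by (intro integral_mono_AE') auto
  also have "\<dots> = 2 * (L2_norm T (\<lambda>t. f t - g t))\<^sup>2 + 2 * (L2_norm T g)\<^sup>2"
    using int by (simp add: power2_L2_norm)
  finally show ?thesis unfolding L2_norm_def by (rule real_sqrt_le_mono)
qed

definition level_bound :: "int set \<Rightarrow> real" where
  "level_bound V = Max (abs ` real_of_int ` V)"

lemma abs_le_level_bound: "finite V \<Longrightarrow> x \<in> real_of_int ` V \<Longrightarrow> \<bar>x\<bar> \<le> level_bound V"
  unfolding level_bound_def by (rule Max_ge) auto

lemma Uad_AE_bounded:
  assumes "finite V" "Uad T V u"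
  shows "AE t in MT T. \<bar>u t\<bar> \<le> level_bound V"
proof -
  have "AE t in MT T. u t \<in> real_of_int ` V" using assms(2) unfolding Uad_def by blast
  then show ?thesis by eventually_elim (rule abs_le_level_bound[OF assms(1)])
qed

lemma Uad_AE_Ints:
  assumes "Uad T V u"
  shows "AE t in MT T. u t \<in> \<int>"
proof -
  have "AE t in MT T. u t \<in> real_of_int ` V" using assms unfolding Uad_def by blast
  then show ?thesis by eventually_elim auto
qed

lemma abs_le_power2_if_Ints:
  fixes x :: real
  assumes "x \<in> \<int>"
  shows "\<bar>x\<bar> \<le> x\<^sup>2"
proof -
  obtain n :: int where n: "x = of_int n" using assms by (auto elim: Ints_cases)
  have "\<bar>n\<bar> * 1 \<le> \<bar>n\<bar> * \<bar>n\<bar>" if "n \<noteq> 0"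
    using that by (intro mult_left_mono) auto
  then have "\<bar>n\<bar> \<le> n\<^sup>2" by (cases "n = 0") (auto simp: power2_eq_square abs_mult[symmetric])
  then show ?thesis unfolding n by (metis of_int_abs of_int_le_iff of_int_power)
qed

lemma Uad_imp_inL2:
  assumes "finite V" "Uad T V u"
  shows "inL2 T u"
proof -
  have meas: "u \<in> borel_measurable (MT T)" using assms(2) unfolding Uad_def inL1_def by blast
  have "AE t in MT T. \<bar>(u t)\<^sup>2\<bar> \<le> (level_bound V)\<^sup>2"
    using Uad_AE_bounded[OF assms] by eventually_elim (simp add: power2_le_if_abs_le)
  moreover have "(\<lambda>t. (u t)\<^sup>2) \<in> borel_measurable (MT T)" using meas by measurable
  ultimately have "integrable (MT T) (\<lambda>t. (u t)\<^sup>2)" by (intro integrable_MT_AE_bounded)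
  then show ?thesis using meas unfolding inL2_def by blast
qed

text \<open>Integer-valued functions satisfy \<open>|w - v| \<le> |w - v|\<^sup>2\<close> pointwise, so on \<open>U\<^sub>a\<^sub>d\<close> the
  \<open>L\<^sup>1\<close> distance is dominated by the squared \<open>L\<^sup>2\<close> distance.\<close>
lemma Uad_L1_le_power2_L2:
  assumes V: "finite V" and v: "Uad T V v" and w: "Uad T V w"
  shows "(\<integral>t. \<bar>w t - v t\<bar> \<partial>MT T) \<le> (L2_norm T (\<lambda>t. w t - v t))\<^sup>2"
  unfolding power2_L2_norm
proof (rule integral_mono_AE')
  show "integrable (MT T) (\<lambda>t. (w t - v t)\<^sup>2)"
    by (rule integrable_square_diff[OF Uad_imp_inL2[OF V w] Uad_imp_inL2[OF V v]])
  show "AE t in MT T. \<bar>w t - v t\<bar> \<le> (w t - v t)\<^sup>2"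
    using Uad_AE_Ints[OF v] Uad_AE_Ints[OF w] by eventually_elim (intro abs_le_power2_if_Ints Ints_diff)
qed simp

lemma Gfun_finite_iff:
  assumes "0 < T" "0 < \<beta>"
  shows "Gfun T \<beta> V u < \<infinity> \<longleftrightarrow> Uad T V u \<and> TV T u < \<infinity>"
  using TV_nonneg[OF assms(1), of u] assms(2) by (cases "TV T u") (auto simp: Gfun_def)

locale prox_grad_run =
  fixes T \<beta> \<eta> m :: real and V :: "int set"
    and F :: "(real \<Rightarrow> real) \<Rightarrow> real" and gradF :: "(real \<Rightarrow> real) \<Rightarrow> real \<Rightarrow> real"
    and u :: "nat \<Rightarrow> real \<Rightarrow> real"
  assumes T_pos: "0 < T" and beta_pos: "0 < \<beta>" and eta_pos: "0 < \<eta>" and V_fin: "finite V"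
    and F_lower: "\<And>v. inL1 T v \<Longrightarrow> m \<le> F v"
    and u0_Uad: "Uad T V (u 0)" and u0_BV: "inBV T (u 0)"
    and alg: "prox_grad_seq T \<beta> V F gradF \<eta> u"
begin

lemma Gfun_iterate_finite: "Gfun T \<beta> V (u k) < \<infinity>"
proof (induction k)
  case 0
  show ?case using u0_Uad u0_BV Gfun_finite_iff[OF T_pos beta_pos] unfolding inBV_def by blast
next
  case (Suc k)
  then have "inL2 T (u k)" using Gfun_finite_iff T_pos beta_pos Uad_imp_inL2 V_fin by blast
  with alg have "\<exists>A B. ereal A + Gfun T \<beta> V (u (Suc k)) \<le> ereal B + Gfun T \<beta> V (u k)"
    unfolding prox_grad_seq_def by blast
  with Suc.IH show ?case by (cases "Gfun T \<beta> V (u (Suc k))"; cases "Gfun T \<beta> V (u k)") auto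
qed

lemma iterate_Uad: "Uad T V (u k)"
  and iterate_TV_finite: "TV T (u k) < \<infinity>"
  using Gfun_iterate_finite Gfun_finite_iff[OF T_pos beta_pos] by blast+

lemma iterate_inL1: "inL1 T (u k)"
  using iterate_Uad unfolding Uad_def by blast

lemma iterate_inL2: "inL2 T (u k)"
  by (rule Uad_imp_inL2[OF V_fin iterate_Uad])

lemma iterate_TV_eq: "TV T (u k) = ereal (real_of_ereal (TV T (u k)))"
  by (simp add: ereal_real_of_TV[OF T_pos iterate_TV_finite])

definition energy :: "nat \<Rightarrow> real" where
  "energy k = F (u k) + \<beta> * real_of_ereal (TV T (u k))"

lemma F_plus_Gfun_iterate: "ereal (F (u k)) + Gfun T \<beta> V (u k) = ereal (energy k)"
proof -
  obtain r where "TV T (u k) = ereal r" using iterate_TV_eq by blast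
  then show ?thesis by (simp add: Gfun_def energy_def iterate_Uad)
qed

lemma energy_descent:
  "energy (Suc k) + \<eta> * (L2_norm T (\<lambda>t. u (Suc k) t - u k t))\<^sup>2 \<le> energy k"
proof -
  have "ereal (F (u (Suc k))) + ereal \<beta> * TV T (u (Suc k))
      + ereal (\<eta> * (L2_norm T (\<lambda>t. u (Suc k) t - u k t))\<^sup>2) \<le> ereal (F (u k)) + ereal \<beta> * TV T (u k)"
    using alg unfolding prox_grad_seq_def by blast
  moreover obtain r r' where "TV T (u k) = ereal r" "TV T (u (Suc k)) = ereal r'"
    using iterate_TV_eq by blast
  ultimately show ?thesis unfolding energy_def by simp
qed

lemma energy_lower_bound: "m \<le> energy k"
  using F_lower[OF iterate_inL1] real_of_TV_nonneg[OF T_pos] beta_pos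
  unfolding energy_def by (smt (verit) mult_nonneg_nonneg)

lemma energy_decseq: "decseq energy"
  using energy_descent eta_pos by (intro decseq_SucI) (smt (verit) mult_nonneg_nonneg zero_le_power2)

lemma energy_convergent: "\<exists>c. energy \<longlonglongrightarrow> c"
  using decseq_convergent[OF energy_decseq, of m] energy_lower_bound by blast

lemma steps_square_summable: "summable (\<lambda>k. (L2_norm T (\<lambda>t. u (Suc k) t - u k t))\<^sup>2)"
proof (rule summableI_nonneg_bounded)
  fix n
  have "\<eta> * (\<Sum>k<n. (L2_norm T (\<lambda>t. u (Suc k) t - u k t))\<^sup>2) \<le> energy 0 - energy n"
  proof (induction n)
    case (Suc n)
    then show ?case using energy_descent[of n] by (simp add: distrib_left)
  qed simp
  then show "(\<Sum>k<n. (L2_norm T (\<lambda>t. u (Suc k) t - u k t))\<^sup>2) \<le> (energy 0 - m) / \<eta>"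
    using energy_lower_bound[of n] eta_pos by (simp add: pos_le_divide_eq mult.commute)
qed simp

lemma steps_tendsto_0: "(\<lambda>k. L2_norm T (\<lambda>t. u (Suc k) t - u k t)) \<longlonglongrightarrow> 0"
  using tendsto_real_sqrt[OF summable_LIMSEQ_zero[OF steps_square_summable]]
  by (simp add: L2_norm_nonneg)

lemma iterate_TV_bounded: "TV T (u k) \<le> ereal ((energy 0 - m) / \<beta>)"
proof -
  have "\<beta> * real_of_ereal (TV T (u k)) \<le> energy 0 - m"
    using F_lower[OF iterate_inL1[of k]] decseqD[OF energy_decseq, of 0 k] unfolding energy_def by simp
  then show ?thesis
    using beta_pos by (subst iterate_TV_eq) (simp add: pos_le_divide_eq mult.commute)
qed

lemma iterates_bounded:
  assumes grad_L2: "\<And>v. inL2 T v \<Longrightarrow> inL2 T (gradF v)"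
    and lipschitz: "\<And>v w. inL2 T v \<Longrightarrow> inL2 T w \<Longrightarrow>
        L2_norm T (\<lambda>t. gradF v t - gradF w t) \<le> L * L2_norm T (\<lambda>t. v t - w t)"
  shows "\<exists>C. \<forall>k. L2_norm T (u k) \<le> C \<and> L2_norm T (gradF (u k)) \<le> C"
proof -
  let ?\<mu> = "measure (MT T) (space (MT T))"
  define N where "N = sqrt ((2 * level_bound V)\<^sup>2 * ?\<mu>)"
  have "L2_norm T (\<lambda>t. u k t - u 0 t) \<le> N" for k
    unfolding N_def
  proof (rule L2_norm_le_if_AE_bounded)
    show "AE t in MT T. \<bar>u k t - u 0 t\<bar> \<le> 2 * level_bound V"
      using Uad_AE_bounded[OF V_fin iterate_Uad, of k] Uad_AE_bounded[OF V_fin iterate_Uad, of 0]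
      by eventually_elim linarith
  qed
  then have "L2_norm T (\<lambda>t. gradF (u k) t - gradF (u 0) t) \<le> \<bar>L\<bar> * N" for k
  proof -
    have "L2_norm T (\<lambda>t. gradF (u k) t - gradF (u 0) t) \<le> L * L2_norm T (\<lambda>t. u k t - u 0 t)"
      by (rule lipschitz[OF iterate_inL2 iterate_inL2])
    also have "\<dots> \<le> \<bar>L\<bar> * L2_norm T (\<lambda>t. u k t - u 0 t)"
      by (rule mult_right_mono[OF abs_ge_self L2_norm_nonneg])
    also have "\<dots> \<le> \<bar>L\<bar> * N"
      using \<open>L2_norm T (\<lambda>t. u k t - u 0 t) \<le> N\<close> by (rule mult_left_mono) simp
    finally show ?thesis .
  qed
  then have "(L2_norm T (\<lambda>t. gradF (u k) t - gradF (u 0) t))\<^sup>2 \<le> (\<bar>L\<bar> * N)\<^sup>2" for k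
    by (rule power_mono[OF _ L2_norm_nonneg])
  define C where "C = max (sqrt ((level_bound V)\<^sup>2 * ?\<mu>))
    (sqrt (2 * (\<bar>L\<bar> * N)\<^sup>2 + 2 * (L2_norm T (gradF (u 0)))\<^sup>2))"
  have "L2_norm T (gradF (u k)) \<le> C" for k
  proof -
    have "L2_norm T (gradF (u k))
        \<le> sqrt (2 * (L2_norm T (\<lambda>t. gradF (u k) t - gradF (u 0) t))\<^sup>2 + 2 * (L2_norm T (gradF (u 0)))\<^sup>2)"
      by (rule L2_norm_le_via_diff[OF grad_L2[OF iterate_inL2] grad_L2[OF iterate_inL2]])
    also have "\<dots> \<le> sqrt (2 * (\<bar>L\<bar> * N)\<^sup>2 + 2 * (L2_norm T (gradF (u 0)))\<^sup>2)"
      using \<open>(L2_norm T (\<lambda>t. gradF (u k) t - gradF (u 0) t))\<^sup>2 \<le> (\<bar>L\<bar> * N)\<^sup>2\<close>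
      by (intro real_sqrt_le_mono) linarith
    finally show ?thesis unfolding C_def by linarith
  qed
  moreover have "L2_norm T (u k) \<le> C" for k
    using L2_norm_le_if_AE_bounded[OF Uad_AE_bounded[OF V_fin iterate_Uad, of k]]
    unfolding C_def by linarith
  ultimately show ?thesis by blast
qed

definition limit :: "real \<Rightarrow> real" where
  "limit t = lim (\<lambda>k. u k t)"

lemma iterate_measurable [measurable]: "u k \<in> borel_measurable (MT T)"
  using iterate_inL1 unfolding inL1_def by blast

lemma limit_measurable: "limit \<in> borel_measurable (MT T)"
  unfolding limit_def by measurable

lemma iterates_AE_tendsto_limit: "AE t in MT T. (\<lambda>k. u k t) \<longlonglongrightarrow> limit t"
  unfolding limit_def
proof (rule AE_convergent_if_summable_increments[OF iterate_measurable])
  show "integrable (MT T) (\<lambda>t. \<bar>u (Suc k) t - u k t\<bar>)" for k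
    using iterate_inL1[of k] iterate_inL1[of "Suc k"] unfolding inL1_def by simp
  show "summable (\<lambda>k. \<integral>t. \<bar>u (Suc k) t - u k t\<bar> \<partial>MT T)"
    by (rule summable_comparison_test'[OF steps_square_summable])
       (simp add: Uad_L1_le_power2_L2[OF V_fin iterate_Uad iterate_Uad])
qed

lemma limit_Uad: "Uad T V limit"
proof -
  have "\<forall>k. AE t in MT T. u k t \<in> real_of_int ` V"
    using iterate_Uad unfolding Uad_def by blast
  then have "AE t in MT T. \<forall>k. u k t \<in> real_of_int ` V"
    by (simp add: AE_all_countable)
  then have limit_values: "AE t in MT T. limit t \<in> real_of_int ` V"
    using iterates_AE_tendsto_limit
  proof eventually_elim
    case (elim t)
    have "closed (real_of_int ` V)" using V_fin by (intro finite_imp_closed) simp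
    moreover have "u k t \<in> real_of_int ` V" for k using elim(1) by blast
    ultimately show ?case using elim(2) by (rule closed_sequentially)
  qed
  then have "AE t in MT T. \<bar>limit t\<bar> \<le> level_bound V"
    by eventually_elim (rule abs_le_level_bound[OF V_fin])
  then have "inL1 T limit"
    unfolding inL1_def using limit_measurable integrable_MT_AE_bounded[OF limit_measurable] by blast
  with limit_values show ?thesis unfolding Uad_def by blast
qed

lemma iterates_L1_tendsto_limit: "(\<lambda>k. L1_norm T (\<lambda>t. u k t - limit t)) \<longlonglongrightarrow> 0"
  by (rule L1_norm_tendsto_0_if_AE_tendsto[OF iterate_measurable limit_measurable
        Uad_AE_bounded[OF V_fin iterate_Uad] Uad_AE_bounded[OF V_fin limit_Uad]
        iterates_AE_tendsto_limit])

lemma limit_inBV: "inBV T limit"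
proof -
  have "TV T limit \<le> ereal ((energy 0 - m) / \<beta>)"
    by (rule TV_le_if_AE_tendsto[OF iterate_measurable limit_measurable
          Uad_AE_bounded[OF V_fin iterate_Uad] iterates_AE_tendsto_limit iterate_TV_bounded])
  then have "TV T limit < \<infinity>" by (rule le_less_trans) simp
  with limit_Uad show ?thesis unfolding inBV_def Uad_def by blast
qed

end

theorem theorem4p1:
  fixes T \<beta> \<eta> L :: real and V :: "int set"
    and F :: "(real \<Rightarrow> real) \<Rightarrow> real" and gradF :: "(real \<Rightarrow> real) \<Rightarrow> (real \<Rightarrow> real)"
    and u :: "nat \<Rightarrow> real \<Rightarrow> real"
  assumes T_pos: "T > 0" and beta_pos: "\<beta> > 0" and eta_pos: "\<eta> > 0"
    and V_fin: "finite V" and V_ne: "V \<noteq> {}"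
    and F_ae: "\<And>v w. inL1 T v \<Longrightarrow> inL1 T w \<Longrightarrow> (AE t in MT T. v t = w t) \<Longrightarrow> F v = F w"
    and F_bdd: "\<exists>m. \<forall>v. inL1 T v \<longrightarrow> m \<le> F v"
    and grad_L2: "\<And>v. inL2 T v \<Longrightarrow> inL2 T (gradF v)"
    and gateaux: "\<And>v h. inL2 T v \<Longrightarrow> inL2 T h \<Longrightarrow>
        ((\<lambda>s. F (\<lambda>t. v t + s * h t)) has_real_derivative L2_inner T (gradF v) h) (at 0)"
    and lipschitz: "\<And>v w. inL2 T v \<Longrightarrow> inL2 T w \<Longrightarrow>
        L2_norm T (\<lambda>t. gradF v t - gradF w t) \<le> L * L2_norm T (\<lambda>t. v t - w t)"
    and u0: "Uad T V (u 0)" "inBV T (u 0)"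
    and alg: "prox_grad_seq T \<beta> V F gradF \<eta> u"
  shows "(\<exists>C. \<forall>k. L2_norm T (u k) \<le> C \<and> L2_norm T (gradF (u k)) \<le> C)
    \<and> decseq (\<lambda>k. ereal (F (u k)) + Gfun T \<beta> V (u k))
    \<and> (\<exists>c::real. (\<lambda>k. ereal (F (u k)) + Gfun T \<beta> V (u k)) \<longlonglongrightarrow> ereal c)
    \<and> (\<lambda>k. L2_norm T (\<lambda>t. u (Suc k) t - u k t)) \<longlonglongrightarrow> 0
    \<and> (\<exists>ubar. Uad T V ubar \<and> inBV T ubar
         \<and> (\<lambda>k. L1_norm T (\<lambda>t. u k t - ubar t)) \<longlonglongrightarrow> 0
         \<and> (\<exists>C. \<forall>k. TV T (u k) \<le> ereal C))"
proof -
  obtain m where "\<forall>v. inL1 T v \<longrightarrow> m \<le> F v" using F_bdd by blast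
  then interpret prox_grad_run T \<beta> \<eta> m V F gradF u
    using T_pos beta_pos eta_pos V_fin u0 alg by unfold_locales auto
  have "decseq (\<lambda>k. ereal (energy k))" "\<exists>c. (\<lambda>k. ereal (energy k)) \<longlonglongrightarrow> ereal c"
    using energy_decseq energy_convergent by (auto simp: decseq_def)
  then show ?thesis
    unfolding F_plus_Gfun_iterate
    using iterates_bounded[OF grad_L2 lipschitz] steps_tendsto_0 limit_Uad limit_inBV
      iterates_L1_tendsto_limit iterate_TV_bounded by blast
qed

end
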